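(* For $s,s'\in\mathscr S_+$: (1) $\lfloor s\rfloor\preceq s\preceq\lceil s\rceil$; (2) if $s\preceq s'$, then $\lfloor s\rfloor\preceq\lfloor s'\rfloor$, $\lceil s\rceil\preceq\lceil s'\rceil$, and $\mathfrak d(s)\le\mathfrak d(s')$.
   Context: $\omega=\{0,1,\dots\}$, $[m]=\{1,\dots,m\}$. A finite sign sequence is $s\in\{-,0,+\}^\omega$ with finitely many nonzero entries; $\mathscr S$ their set; $\operatorname{supp}(s)=\{i:s_i\ne0\}$; $\mathscr S_+=\mathscr S\cap\{0,+\}^\omega$. $\mathrm{SC}(t)$ = number of pairs $i<j$ with $\{t_i,t_j\}=\{-,+\}$ and $t_k=0$ for $i<k<j$. $\mathfrak d(s)=\max\{\mathrm{SC}(t):t\in\mathscr S,\ t_i\in\{-,0,s_i\}\ \forall i\}$ for $s\in\mathscr S_+$. $\mathscr S_+^\circ=\{s\in\mathscr S_+:\mathfrak d(s)=\#\operatorname{supp}(s)\}$. Interval decomposition of $s\in\mathscr S_+$: $\operatorname{supp}(s)=X_0\amalg\cdots\amalg X_k$ into intervals with $0\in X_0$ if $0\in\operatorname{supp}(s)$ else $X_0=\emptyset$, $X_i\neq\emptyset$ for $i\in[k]$, $\min X_i-\max X_{i-1}\ge2$ ($\max\emptyset=-\infty$). $\lfloor X_i\rfloor=\{\min X_i-1\}\amalg X_i$ if $\#X_i$ odd, else $X_i$; $\lceil X_i\rceil=X_i\amalg\{\max X_i+1\}$ if $\#X_i$ odd, else $X_i$; $\operatorname{supp}(\lfloor s\rfloor)=X_0\amalg\lfloor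 X_1\rfloor\amalg\cdots\amalg\lfloor X_k\rfloor$, $\operatorname{supp}(\lceil s\rceil)=X_0\amalg\lceil X_1\rceil\amalg\cdots\amalg\lceil X_k\rceil$. On $\mathscr S_+^\circ$: with $\operatorname{supp}(s)=\{d_1>\cdots>d_m\}$, $\operatorname{supp}(s')=\{d'_1>\cdots>d'_{m'}\}$, $s\preceq_0 s'$ iff $m\le m'$ and $d_i\le d'_i$ for $i\in[m]$. On $\mathscr S_+$: $s\preceq s'$ iff $s=s'$, or $s\ne s'$ and $\lceil s\rceil\preceq_0\lfloor s'\rfloor$ (a partial order); $s\prec s'$ means $s\preceq s'$ and $s\ne s'$. *)

theory Defs
  imports Main
begin

datatype sign = Neg | Zero | Pos

type_synonym sseq = "nat \<Rightarrow> sign"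

definition supp :: "sseq \<Rightarrow> nat set" where
  "supp s = {i. s i \<noteq> Zero}"

definition SS :: "sseq set" where
  "SS = {t. finite (supp t)}"

definition SSplus :: "sseq set" where
  "SSplus = {s \<in> SS. \<forall>i. s i \<in> {Zero, Pos}}"

definition SC :: "sseq \<Rightarrow> nat" where
  "SC t = card {(i, j). i < j \<and> {t i, t j} = {Neg, Pos} \<and> (\<forall>k. i < k \<and> k < j \<longrightarrow> t k = Zero)}"

definition dd :: "sseq \<Rightarrow> nat" where
  "dd s = Max {SC t | t. t \<in> SS \<and> (\<forall>i. t i \<in> {Neg, Zero, s i})}"

definition SSplus_circ :: "sseq set" where
  "SSplus_circ = {s \<in> SSplus. dd s = card (supp s)}"

definition runs :: "nat set \<Rightarrow> nat set set" where
  "runs A = {X. \<exists>a b. a \<le> b \<and> X = {a..b} \<and> X \<subseteq> A \<and> (a = 0 \<or> a - 1 \<notin> A) \<and> b + 1 \<notin> A}"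

definition floor_supp :: "nat set \<Rightarrow> nat set" where
  "floor_supp A = A \<union> {Min X - 1 | X. X \<in> runs A \<and> 0 \<notin> X \<and> odd (card X)}"

definition ceil_supp :: "nat set \<Rightarrow> nat set" where
  "ceil_supp A = A \<union> {Max X + 1 | X. X \<in> runs A \<and> 0 \<notin> X \<and> odd (card X)}"

definition of_supp :: "nat set \<Rightarrow> sseq" where
  "of_supp A = (\<lambda>i. if i \<in> A then Pos else Zero)"

definition sfloor :: "sseq \<Rightarrow> sseq" where
  "sfloor s = of_supp (floor_supp (supp s))"

definition sceil :: "sseq \<Rightarrow> sseq" where
  "sceil s = of_supp (ceil_supp (supp s))"

definition dsupp :: "sseq \<Rightarrow> nat list" where
  "dsupp s = rev (sorted_list_of_set (supp s))"

definition prec0 :: "sseq \<Rightarrow> sseq \<Rightarrow> bool" where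
  "prec0 s s' \<longleftrightarrow> s \<in> SSplus_circ \<and> s' \<in> SSplus_circ \<and>
     length (dsupp s) \<le> length (dsupp s') \<and>
     (\<forall>i < length (dsupp s). dsupp s ! i \<le> dsupp s' ! i)"

definition prec :: "sseq \<Rightarrow> sseq \<Rightarrow> bool" where
  "prec s s' \<longleftrightarrow> s \<in> SSplus \<and> s' \<in> SSplus \<and> (s = s' \<or> (s \<noteq> s' \<and> prec0 (sceil s) (sfloor s')))"

end

theory Submission
  imports Defs
begin

text \<open>For \<open>A = supp s\<close>, \<open>floor_supp A\<close> and \<open>ceil_supp A\<close> lengthen each odd run of \<open>A\<close> that
  avoids \<open>0\<close> by one cell, to the left resp. to the right. Neither result has such odd runs left,
  so both operations fix them, and both add exactly one element per odd run.
  If no run of \<open>B\<close> avoiding \<open>0\<close> is odd, \<open>B\<close> is tiled by dominoes \<open>{x, x + 1}\<close> (and possibly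
  \<open>{0}\<close>); charging every sign change of \<open>t\<close> to a cell of the domino of its positive end gives
  \<open>SC t \<le> card B\<close> when the positive entries of \<open>t\<close> lie in \<open>B\<close>. Alternating signs along
  \<open>floor_supp A\<close> attain this bound with positive entries inside \<open>A\<close>, hence
  \<open>dd s = card (floor_supp A)\<close>.
  Comparing decreasing support lists entrywise is the same as comparing, for every \<open>v\<close>, the
  numbers of elements \<open>\<ge> v\<close>. In this order \<open>floor_supp A\<close> lies below \<open>ceil_supp A\<close>, and all
  claims follow by transitivity.\<close>

section \<open>Runs, floor and ceiling of a support\<close>

definition run_length :: "nat set \<Rightarrow> nat \<Rightarrow> nat" where
  "run_length X q = (LEAST k. q + k \<notin> X)"

lemma run_length_notin:
  assumes "finite X"
  shows "q + run_length X q \<notin> X"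
proof -
  obtain m where "\<forall>x\<in>X. x < m"
    using assms by (auto simp: finite_nat_set_iff_bounded)
  then have "q + m \<notin> X" by fastforce
  then show ?thesis
    unfolding run_length_def by (rule LeastI)
qed

lemma run_length_less_mem: "k < run_length X q \<Longrightarrow> q + k \<in> X"
  unfolding run_length_def using not_less_Least by blast

lemma run_length_eqI:
  "(\<And>k. k < n \<Longrightarrow> q + k \<in> X) \<Longrightarrow> q + n \<notin> X \<Longrightarrow> run_length X q = n"
  unfolding run_length_def by (rule Least_equality) (auto simp: not_less[symmetric])

lemma run_length_eq_0: "q \<notin> X \<Longrightarrow> run_length X q = 0"
  by (rule run_length_eqI) auto

lemma run_length_Suc:
  assumes "finite X" and "q \<in> X"
  shows "run_length X q = Suc (run_length X (Suc q))"
proof (rule run_length_eqI)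
  fix k assume "k < Suc (run_length X (Suc q))"
  then show "q + k \<in> X"
    using assms(2) run_length_less_mem[of "k - 1" X "Suc q"] by (cases k) auto
next
  show "q + Suc (run_length X (Suc q)) \<notin> X"
    using run_length_notin[OF assms(1), of "Suc q"] by simp
qed

lemma run_length_pos: "finite X \<Longrightarrow> q \<in> X \<Longrightarrow> 0 < run_length X q"
  using run_length_Suc by simp

lemma run_length_add:
  assumes "finite X" and "\<And>j. j < k \<Longrightarrow> q + j \<in> X"
  shows "run_length X q = k + run_length X (q + k)"
  using assms(2)
proof (induction k arbitrary: q)
  case (Suc k)
  have "run_length X (Suc q) = k + run_length X (Suc q + k)"
    using Suc.IH[of "Suc q"] Suc.prems by fastforce
  then show ?case
    using run_length_Suc[OF assms(1), of q] Suc.prems[of 0] by simp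
qed simp

definition run_starts :: "nat set \<Rightarrow> nat set" where
  "run_starts X = {p \<in> X. 0 < p \<and> p - 1 \<notin> X}"

definition odd_run_starts :: "nat set \<Rightarrow> nat set" where
  "odd_run_starts X = {p \<in> run_starts X. odd (run_length X p)}"

lemma run_end_inj_on:
  assumes "finite A"
  shows "inj_on (\<lambda>p. p + run_length A p) (run_starts A)"
proof -
  have False if p: "p \<in> run_starts A" and q: "q \<in> run_starts A" and "p < q"
    and e: "p + run_length A p = q + run_length A q" for p q
  proof -
    have "q - 1 - p < run_length A p"
      using e \<open>p < q\<close> run_length_pos[OF assms, of q] q by (auto simp: run_starts_def)
    then have "q - 1 \<in> A"
      using run_length_less_mem \<open>p < q\<close> by fastforce
    then show False using q by (simp add: run_starts_def)
  qed
  then show ?thesis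
    by (metis (mono_tags, lifting) inj_onI linorder_neqE_nat)
qed

lemma odd_nonzero_runs_eq:
  assumes "finite A"
  shows "{X \<in> runs A. 0 \<notin> X \<and> odd (card X)} = (\<lambda>p. {p..<p + run_length A p}) ` odd_run_starts A"
proof (intro equalityI subsetI)
  fix X assume "X \<in> {X \<in> runs A. 0 \<notin> X \<and> odd (card X)}"
  then obtain a b where ab: "a \<le> b" "X = {a..b}" "X \<subseteq> A" "a = 0 \<or> a - 1 \<notin> A" "b + 1 \<notin> A"
    and X: "0 \<notin> X" "odd (card X)"
    unfolding runs_def by blast
  have "run_length A a = Suc b - a"
    by (rule run_length_eqI) (use ab in auto)
  with ab X show "X \<in> (\<lambda>p. {p..<p + run_length A p}) ` odd_run_starts A"
    by (auto simp: odd_run_starts_def run_starts_def intro!: image_eqI[of _ _ a])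
next
  fix X assume "X \<in> (\<lambda>p. {p..<p + run_length A p}) ` odd_run_starts A"
  then obtain p where p: "p \<in> odd_run_starts A" and X: "X = {p..<p + run_length A p}"
    by blast
  have pos: "0 < run_length A p"
    using p run_length_pos[OF assms] by (auto simp: odd_run_starts_def run_starts_def)
  have "X \<subseteq> A"
  proof
    fix x assume "x \<in> X"
    then show "x \<in> A"
      using run_length_less_mem[of "x - p" A p] by (auto simp: X)
  qed
  moreover have "X = {p..p + run_length A p - 1}"
    using pos by (auto simp: X)
  ultimately have "X \<in> runs A"
    unfolding runs_def
    by (intro CollectI exI[of _ p] exI[of _ "p + run_length A p - 1"] conjI)
      (use p pos run_length_notin[OF assms, of p] in \<open>auto simp: odd_run_starts_def run_starts_def\<close>)
  then show "X \<in> {X \<in> runs A. 0 \<notin> X \<and> odd (card X)}"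
    using p by (auto simp: X odd_run_starts_def run_starts_def)
qed

lemma floor_supp_eq:
  assumes "finite A"
  shows "floor_supp A = A \<union> (\<lambda>p. p - 1) ` odd_run_starts A"
proof -
  have "Min {p..<p + run_length A p} = p" if "p \<in> odd_run_starts A" for p
    using that run_length_pos[OF assms] by (intro Min_eqI) (auto simp: odd_run_starts_def run_starts_def)
  then have "(\<lambda>X. Min X - 1) ` {X \<in> runs A. 0 \<notin> X \<and> odd (card X)} = (\<lambda>p. p - 1) ` odd_run_starts A"
    unfolding odd_nonzero_runs_eq[OF assms] image_image by (intro image_cong) auto
  then show ?thesis
    unfolding floor_supp_def by blast
qed

lemma ceil_supp_eq:
  assumes "finite A"
  shows "ceil_supp A = A \<union> (\<lambda>p. p + run_length A p) ` odd_run_starts A"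
proof -
  have "Max {p..<p + run_length A p} + 1 = p + run_length A p" if "p \<in> odd_run_starts A" for p
  proof -
    have "0 < run_length A p"
      using that run_length_pos[OF assms] by (auto simp: odd_run_starts_def run_starts_def)
    then have "Max {p..<p + run_length A p} = p + run_length A p - 1"
      by (intro Max_eqI) auto
    then show ?thesis
      using \<open>0 < run_length A p\<close> by simp
  qed
  then have "(\<lambda>X. Max X + 1) ` {X \<in> runs A. 0 \<notin> X \<and> odd (card X)}
      = (\<lambda>p. p + run_length A p) ` odd_run_starts A"
    unfolding odd_nonzero_runs_eq[OF assms] image_image by (intro image_cong) auto
  then show ?thesis
    unfolding ceil_supp_def by blast
qed

lemma subset_floor_supp: "A \<subseteq> floor_supp A"
  unfolding floor_supp_def by blast

lemma subset_ceil_supp: "A \<subseteq> ceil_supp A"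
  unfolding ceil_supp_def by blast

lemma odd_run_starts_subset: "odd_run_starts A \<subseteq> A"
  unfolding odd_run_starts_def run_starts_def by blast

lemma finite_floor_supp: "finite A \<Longrightarrow> finite (floor_supp A)"
  using floor_supp_eq odd_run_starts_subset finite_subset by fastforce

lemma finite_ceil_supp: "finite A \<Longrightarrow> finite (ceil_supp A)"
  using ceil_supp_eq odd_run_starts_subset finite_subset by fastforce

lemma floor_supp_eq_self: "finite A \<Longrightarrow> odd_run_starts A = {} \<Longrightarrow> floor_supp A = A"
  by (simp add: floor_supp_eq)

lemma ceil_supp_eq_self: "finite A \<Longrightarrow> odd_run_starts A = {} \<Longrightarrow> ceil_supp A = A"
  by (simp add: ceil_supp_eq)

lemma floor_supp_new:
  "finite A \<Longrightarrow> x \<in> floor_supp A \<Longrightarrow> x \<notin> A \<Longrightarrow> Suc x \<in> odd_run_starts A"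
  by (auto simp: floor_supp_eq odd_run_starts_def run_starts_def)

lemma ceil_supp_new:
  "finite A \<Longrightarrow> x \<in> ceil_supp A \<Longrightarrow> x \<notin> A \<Longrightarrow> \<exists>p\<in>odd_run_starts A. x = p + run_length A p"
  by (auto simp: ceil_supp_eq)

lemma ceil_supp_new_pred_mem:
  assumes "finite A" and "x \<in> ceil_supp A" and "x \<notin> A"
  shows "x - 1 \<in> A"
proof -
  obtain p where p: "p \<in> odd_run_starts A" "x = p + run_length A p"
    using ceil_supp_new assms by blast
  then have "0 < run_length A p"
    using run_length_pos[OF assms(1)] odd_run_starts_subset by blast
  then show ?thesis
    using run_length_less_mem[of "run_length A p - 1" A p] p(2) by simp
qed

lemma odd_run_length_floor_supp:
  assumes "finite A" and "q \<in> floor_supp A"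
  shows "odd (run_length (floor_supp A) q) \<longleftrightarrow> q \<in> A \<and> odd (run_length A q)"
  using assms(2)
proof (induction "run_length (floor_supp A) q" arbitrary: q rule: less_induct)
  case less
  let ?B = "floor_supp A"
  have RB: "run_length ?B q = Suc (run_length ?B (Suc q))"
    using run_length_Suc[OF finite_floor_supp[OF assms(1)] less.prems] .
  have RA: "q \<in> A \<Longrightarrow> run_length A q = Suc (run_length A (Suc q))"
    using run_length_Suc[OF assms(1)] by blast
  show ?case
  proof (cases "Suc q \<in> ?B")
    case True
    then have IH: "odd (run_length ?B (Suc q)) \<longleftrightarrow> Suc q \<in> A \<and> odd (run_length A (Suc q))"
      using less.hyps[of "Suc q"] RB by simp
    consider "q \<in> A" "Suc q \<in> A" | "q \<in> A" "Suc q \<notin> A" | "q \<notin> A"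
      by blast
    then show ?thesis
    proof cases
      case 3
      then have "Suc q \<in> odd_run_starts A"
        using floor_supp_new[OF assms(1) less.prems] by blast
      then show ?thesis
        using IH RB 3 by (simp add: odd_run_starts_def run_starts_def)
    next
      case 1
      then show ?thesis
        using IH RA RB by simp
    next
      case 2
      then show ?thesis
        using IH RA RB run_length_eq_0 by simp
    qed
  next
    case False
    have "q \<in> A"
      using floor_supp_new[OF assms(1) less.prems] False odd_run_starts_subset subset_floor_supp
      by blast
    moreover have "Suc q \<notin> A"
      using False subset_floor_supp by blast
    ultimately show ?thesis
      using False RA RB run_length_eq_0[of "Suc q"] by simp
  qed
qed

lemma odd_run_starts_floor_supp:
  assumes "finite A"
  shows "odd_run_starts (floor_supp A) = {}"
proof (rule ccontr)
  assume "odd_run_starts (floor_supp A) \<noteq> {}"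
  then obtain q where q: "q \<in> floor_supp A" "0 < q" "q - 1 \<notin> floor_supp A"
    "odd (run_length (floor_supp A) q)"
    by (auto simp: odd_run_starts_def run_starts_def)
  then have "q \<in> odd_run_starts A"
    using odd_run_length_floor_supp[OF assms q(1)] subset_floor_supp
    by (auto simp: odd_run_starts_def run_starts_def)
  then show False
    using q(3) by (simp add: floor_supp_eq[OF assms])
qed

text \<open>An even run of \<open>A\<close> stays a run of \<open>ceil_supp A\<close>; an odd one gains the cell after its end,
  which may join it to the next run of \<open>A\<close>, whose length is even by induction.\<close>
lemma even_run_length_ceil_supp:
  assumes "finite A" and "q \<in> run_starts A"
  shows "even (run_length (ceil_supp A) q)"
  using assms(2)
proof (induction "run_length (ceil_supp A) q" arbitrary: q rule: less_induct)
  case less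
  let ?C = "ceil_supp A"
  have fC: "finite ?C"
    using finite_ceil_supp[OF assms(1)] .
  define k where "k = run_length A q"
  have k: "0 < k" "q + k \<notin> A"
    using run_length_pos[OF assms(1)] run_length_notin[OF assms(1)] less.prems
    by (auto simp: k_def run_starts_def)
  have RC: "run_length ?C q = k + run_length ?C (q + k)"
    using run_length_add[OF fC] run_length_less_mem subset_ceil_supp
    unfolding k_def by blast
  show ?case
  proof (cases "even k")
    case True
    have "q + k \<notin> ?C"
    proof
      assume "q + k \<in> ?C"
      then obtain p where p: "p \<in> odd_run_starts A" "q + k = p + run_length A p"
        using ceil_supp_new[OF assms(1)] k(2) by blast
      then have "p = q"
        using run_end_inj_on[OF assms(1)] less.prems
        by (auto simp: inj_on_def odd_run_starts_def k_def)
      then show False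
        using p(1) True by (simp add: odd_run_starts_def k_def)
    qed
    then show ?thesis
      using RC True run_length_eq_0 by simp
  next
    case False
    then have "q + k \<in> ?C"
      using less.prems by (auto simp: ceil_supp_eq[OF assms(1)] odd_run_starts_def k_def)
    then have RC': "run_length ?C (q + k) = Suc (run_length ?C (Suc (q + k)))"
      using run_length_Suc[OF fC] by blast
    show ?thesis
    proof (cases "Suc (q + k) \<in> ?C")
      case True
      then have "Suc (q + k) \<in> A"
        using ceil_supp_new_pred_mem[OF assms(1)] k(2) by force
      then have "Suc (q + k) \<in> run_starts A"
        using k(2) by (simp add: run_starts_def)
      then have "even (run_length ?C (Suc (q + k)))"
        using less.hyps[of "Suc (q + k)"] RC RC' by simp
      then show ?thesis
        using RC RC' False by simp
    qed (use RC RC' False run_length_eq_0 in simp)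
  qed
qed

lemma odd_run_starts_ceil_supp:
  assumes "finite A"
  shows "odd_run_starts (ceil_supp A) = {}"
proof (rule ccontr)
  assume "odd_run_starts (ceil_supp A) \<noteq> {}"
  then obtain q where q: "q \<in> ceil_supp A" "0 < q" "q - 1 \<notin> ceil_supp A"
    "odd (run_length (ceil_supp A) q)"
    by (auto simp: odd_run_starts_def run_starts_def)
  then have "q \<in> A"
    using ceil_supp_new_pred_mem[OF assms] subset_ceil_supp by blast
  then have "q \<in> run_starts A"
    using q subset_ceil_supp by (auto simp: run_starts_def)
  then show False
    using even_run_length_ceil_supp[OF assms] q(4) by blast
qed

lemma card_floor_supp:
  assumes "finite A"
  shows "card (floor_supp A) = card A + card (odd_run_starts A)"
proof -
  have fin: "finite (odd_run_starts A)"
    using assms odd_run_starts_subset finite_subset by blast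
  have "inj_on (\<lambda>p. p - 1) (odd_run_starts A)"
    by (auto simp: inj_on_def odd_run_starts_def run_starts_def)
  moreover have "A \<inter> (\<lambda>p. p - 1) ` odd_run_starts A = {}"
    by (auto simp: odd_run_starts_def run_starts_def)
  ultimately show ?thesis
    using assms fin by (simp add: floor_supp_eq card_Un_disjoint card_image)
qed

lemma card_ceil_supp:
  assumes "finite A"
  shows "card (ceil_supp A) = card A + card (odd_run_starts A)"
proof -
  have fin: "finite (odd_run_starts A)"
    using assms odd_run_starts_subset finite_subset by blast
  have "inj_on (\<lambda>p. p + run_length A p) (odd_run_starts A)"
    using run_end_inj_on[OF assms] by (rule inj_on_subset) (auto simp: odd_run_starts_def)
  moreover have "A \<inter> (\<lambda>p. p + run_length A p) ` odd_run_starts A = {}"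
    using run_length_notin[OF assms] by blast
  ultimately show ?thesis
    using assms fin by (simp add: ceil_supp_eq card_Un_disjoint card_image)
qed

section \<open>Sign changes\<close>

definition sign_changes :: "sseq \<Rightarrow> (nat \<times> nat) set" where
  "sign_changes t = {(p, n). t p = Pos \<and> t n = Neg \<and>
     (\<forall>k. p < k \<and> k < n \<or> n < k \<and> k < p \<longrightarrow> t k = Zero)}"

lemma SC_eq_card_sign_changes: "SC t = card (sign_changes t)"
proof -
  let ?ends = "\<lambda>(p, n). (min p n, max p n)"
  have inj: "inj_on ?ends (sign_changes t)"
  proof (rule inj_on_inverseI)
    fix c assume "c \<in> sign_changes t"
    then obtain p n where "c = (p, n)" "t p = Pos" "t n = Neg"
      by (auto simp: sign_changes_def)
    then show "(\<lambda>(i, j). if t i = Pos then (i, j) else (j, i)) (?ends c) = c"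
      by (cases "p < n") auto
  qed
  have ends_image: "?ends ` sign_changes t = {(i, j). i < j \<and> {t i, t j} = {Neg, Pos} \<and>
      (\<forall>k. i < k \<and> k < j \<longrightarrow> t k = Zero)}" (is "_ = ?Ch")
  proof (intro equalityI subsetI)
    fix c assume "c \<in> ?ends ` sign_changes t"
    then obtain p n where pn: "(p, n) \<in> sign_changes t" "c = (min p n, max p n)"
      by auto
    then have "p \<noteq> n"
      by (auto simp: sign_changes_def)
    then show "c \<in> ?Ch"
      using pn by (cases "p < n") (auto simp: sign_changes_def insert_commute)
  next
    fix c assume "c \<in> ?Ch"
    then obtain i j where c: "c = (i, j)" "i < j" "{t i, t j} = {Neg, Pos}"
      "\<forall>k. i < k \<and> k < j \<longrightarrow> t k = Zero"
      by blast
    then consider "(i, j) \<in> sign_changes t" | "(j, i) \<in> sign_changes t"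
      by (auto simp: sign_changes_def doubleton_eq_iff)
    then show "c \<in> ?ends ` sign_changes t"
    proof cases
      case 1
      then show ?thesis
        using c(1,2) by (intro image_eqI[of _ _ "(i, j)"]) auto
    next
      case 2
      then show ?thesis
        using c(1,2) by (intro image_eqI[of _ _ "(j, i)"]) auto
    qed
  qed
  show ?thesis
    unfolding SC_def ends_image[symmetric] card_image[OF inj] ..
qed

lemma sign_changes_unique:
  assumes "(p, n) \<in> sign_changes t" and "(p, n') \<in> sign_changes t" and "p < n \<longleftrightarrow> p < n'"
  shows "n = n'"
proof -
  have "p \<noteq> n" "p \<noteq> n'"
    using assms(1,2) by (auto simp: sign_changes_def)
  then show ?thesis
    using assms by (cases n n' rule: linorder_cases) (auto simp: sign_changes_def)
qed

lemma sign_changes_no_Pos: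
  "(p, n) \<in> sign_changes t \<Longrightarrow> p < q \<and> q \<le> n \<or> n \<le> q \<and> q < p \<Longrightarrow> t q \<noteq> Pos"
  unfolding sign_changes_def by (cases "q = n") auto

text \<open>If \<open>odd_run_starts B = {}\<close>, every run of \<open>B\<close> not containing \<open>0\<close> has even length and is
  tiled, from its right end, by dominoes \<open>{x, Suc x}\<close>; \<open>partner B\<close> swaps the two cells of each
  domino and fixes \<open>0\<close> when the run containing \<open>0\<close> is odd.\<close>
definition partner :: "nat set \<Rightarrow> nat \<Rightarrow> nat" where
  "partner B x = (if even (run_length B x) then Suc x else x - 1)"

lemma pred_mem_if_odd_run_length:
  assumes "odd_run_starts B = {}" and "x \<in> B" and "0 < x" and "odd (run_length B x)"
  shows "x - 1 \<in> B"
  using assms by (auto simp: odd_run_starts_def run_starts_def)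

lemma Suc_mem_if_even_run_length:
  assumes "finite B" and "x \<in> B" and "even (run_length B x)"
  shows "Suc x \<in> B \<and> odd (run_length B (Suc x))"
proof -
  have "odd (run_length B (Suc x))"
    using run_length_Suc[OF assms(1,2)] assms(3) by simp
  moreover from this have "Suc x \<in> B"
    using run_length_eq_0 by fastforce
  ultimately show ?thesis
    by blast
qed

lemma partner_mem:
  assumes "finite B" and "odd_run_starts B = {}" and "x \<in> B"
  shows "partner B x \<in> B"
  using Suc_mem_if_even_run_length[OF assms(1,3)] pred_mem_if_odd_run_length[OF assms(2,3)] assms(3)
  by (cases "x = 0") (auto simp: partner_def)

lemma partner_partner:
  assumes "finite B" and "odd_run_starts B = {}" and "x \<in> B"
  shows "partner B (partner B x) = x"
proof (cases "even (run_length B x)")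
  case True
  then show ?thesis
    using Suc_mem_if_even_run_length[OF assms(1,3)] by (simp add: partner_def)
next
  case odd: False
  show ?thesis
  proof (cases "x = 0")
    case False
    then have "x - 1 \<in> B"
      using pred_mem_if_odd_run_length[OF assms(2,3)] odd by blast
    then have "run_length B (x - 1) = Suc (run_length B x)"
      using run_length_Suc[OF assms(1)] False by fastforce
    then show ?thesis
      using odd False by (simp add: partner_def)
  qed (use odd in \<open>simp add: partner_def\<close>)
qed

lemma sign_change_towards_partner_not_Pos:
  assumes c: "(p, n) \<in> sign_changes t" and "p < n \<longleftrightarrow> p < partner B p"
  shows "t (partner B p) \<noteq> Pos"
proof -
  have "p \<noteq> n"
    using c by (auto simp: sign_changes_def)
  then have "p < partner B p \<and> partner B p \<le> n \<or> n \<le> partner B p \<and> partner B p < p"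
    using assms(2) by (auto simp: partner_def)
  then show ?thesis
    using sign_changes_no_Pos[OF c] by blast
qed

text \<open>A sign change is sent to its positive end, or to the partner of that end if the change
  points towards the partner. Two changes can only collide when a change points from \<open>p\<close>
  towards a positive partner cell, which the zeros between the ends of a change forbid.\<close>
lemma SC_le_card:
  assumes "finite B" and "odd_run_starts B = {}" and "\<And>i. t i = Pos \<Longrightarrow> i \<in> B"
  shows "SC t \<le> card B"
proof -
  define toward where "toward p n \<longleftrightarrow> (p < n \<longleftrightarrow> p < partner B p)" for p n
  define f where "f = (\<lambda>(p, n). if toward p n then partner B p else p)"
  have pos_mem: "p \<in> B" if "(p, n) \<in> sign_changes t" for p n
    using assms(3) that by (simp add: sign_changes_def)
  have partner_not_Pos: "t (partner B p) \<noteq> Pos"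
    if "(p, n) \<in> sign_changes t" and "toward p n" for p n
    using sign_change_towards_partner_not_Pos that by (simp add: toward_def)
  have "inj_on f (sign_changes t)"
  proof (rule inj_onI, clarify)
    fix p n p' n'
    assume c: "(p, n) \<in> sign_changes t" and c': "(p', n') \<in> sign_changes t"
      and e: "f (p, n) = f (p', n')"
    have pos: "t p = Pos" "t p' = Pos"
      using c c' by (simp_all add: sign_changes_def)
    have "p = p'"
    proof (cases "toward p n"; cases "toward p' n'")
      assume "toward p n" "toward p' n'"
      then have "partner B p = partner B p'"
        using e by (simp add: f_def)
      then show "p = p'"
        using partner_partner[OF assms(1,2)] pos_mem c c' by metis
    next
      assume "toward p n" "\<not> toward p' n'"
      then show "p = p'"
        using e partner_not_Pos[OF c] pos by (simp add: f_def)
    next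
      assume "\<not> toward p n" "toward p' n'"
      then show "p = p'"
        using e partner_not_Pos[OF c'] pos by (simp add: f_def)
    qed (use e in \<open>simp add: f_def\<close>)
    moreover have "toward p n \<longleftrightarrow> toward p' n'"
      using e partner_not_Pos[OF c] partner_not_Pos[OF c'] pos \<open>p = p'\<close>
      by (auto simp: f_def split: if_splits)
    ultimately have "p < n \<longleftrightarrow> p < n'"
      by (auto simp: toward_def)
    then show "p = p' \<and> n = n'"
      using sign_changes_unique[OF c] c' \<open>p = p'\<close> by simp
  qed
  moreover have "f ` sign_changes t \<subseteq> B"
    using pos_mem partner_mem[OF assms(1,2)] by (auto simp: f_def)
  ultimately show ?thesis
    unfolding SC_eq_card_sign_changes using assms(1) by (rule card_inj_on_le)
qed

lemma ex_SC_ge_card: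
  assumes "finite B"
  shows "\<exists>t\<in>SS. (\<forall>i. t i = Pos \<longrightarrow> i \<in> B \<and> odd (run_length B i)) \<and> card B \<le> SC t"
proof -
  txt \<open>Signs alternate along each run of \<open>B\<close>, ending with \<open>Pos\<close> on its last cell, and the
    cell after each run is \<open>Neg\<close>; so every \<open>q \<in> B\<close> forms a sign change with \<open>Suc q\<close>.\<close>
  define t where "t q = (if q \<in> B then if odd (run_length B q) then Pos else Neg
                         else if q \<in> Suc ` B then Neg else Zero)" for q
  define c where "c q = (if odd (run_length B q) then (q, Suc q) else (Suc q, q))" for q
  have "supp t \<subseteq> B \<union> Suc ` B"
    by (auto simp: supp_def t_def)
  then have fin: "finite (supp t)"
    using assms finite_subset by blast
  have "c q \<in> sign_changes t" if "q \<in> B" for q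
  proof (cases "odd (run_length B q)")
    case True
    then have "Suc q \<in> B \<Longrightarrow> even (run_length B (Suc q))"
      using run_length_Suc[OF assms that] by simp
    then show ?thesis
      using True that by (auto simp: c_def t_def sign_changes_def)
  next
    case False
    then show ?thesis
      using Suc_mem_if_even_run_length[OF assms that] that by (auto simp: c_def t_def sign_changes_def)
  qed
  moreover have "inj_on c B"
    by (auto simp: inj_on_def c_def split: if_splits)
  moreover have "finite (sign_changes t)"
    by (rule finite_subset[of _ "supp t \<times> supp t"]) (use fin in \<open>auto simp: sign_changes_def supp_def\<close>)
  ultimately have "card B \<le> SC t"
    unfolding SC_eq_card_sign_changes by (intro card_inj_on_le[of c]) auto
  moreover have "t \<in> SS"
    using fin by (simp add: SS_def)
  ultimately show ?thesis
    by (intro bexI[of _ t]) (auto simp: t_def)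
qed

lemma SSplus_finite_supp: "s \<in> SSplus \<Longrightarrow> finite (supp s)"
  by (simp add: SSplus_def SS_def)

lemma dd_eq_card_floor_supp:
  assumes "s \<in> SSplus"
  shows "dd s = card (floor_supp (supp s))"
proof -
  let ?A = "supp s"
  let ?B = "floor_supp ?A"
  let ?T = "{SC t | t. t \<in> SS \<and> (\<forall>i. t i \<in> {Neg, Zero, s i})}"
  have fin: "finite ?A" "finite ?B"
    using SSplus_finite_supp[OF assms] finite_floor_supp by blast+
  have Pos_iff: "s i = Pos \<longleftrightarrow> i \<in> ?A" for i
    using assms by (auto simp: SSplus_def supp_def)
  have "SC t \<le> card ?B" if "\<forall>i. t i \<in> {Neg, Zero, s i}" for t
  proof (rule SC_le_card[OF fin(2) odd_run_starts_floor_supp[OF fin(1)]])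
    fix i assume "t i = Pos"
    then have "s i = Pos"
      using that[rule_format, of i] by auto
    then show "i \<in> ?B"
      using Pos_iff subset_floor_supp by blast
  qed
  then have upper: "\<forall>k\<in>?T. k \<le> card ?B"
    by blast
  obtain t where t: "t \<in> SS" "\<And>i. t i = Pos \<Longrightarrow> i \<in> ?B \<and> odd (run_length ?B i)"
    "card ?B \<le> SC t"
    using ex_SC_ge_card[OF fin(2)] by blast
  have "t i \<in> {Neg, Zero, s i}" for i
  proof (cases "t i")
    case Pos
    then have "i \<in> ?B" "odd (run_length ?B i)"
      using t(2) by auto
    then have "s i = Pos"
      using odd_run_length_floor_supp[OF fin(1)] Pos_iff by blast
    then show ?thesis
      using Pos by simp
  qed auto
  then have T: "SC t \<in> ?T"
    using t(1) by (intro CollectI exI[of _ t]) simp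
  then have max: "SC t = card ?B"
    using bspec[OF upper] t(3) by (simp add: le_antisym)
  have "?T \<subseteq> {..card ?B}"
    using upper by (auto simp del: mem_Collect_eq)
  then have "finite ?T"
    by (rule finite_subset) simp
  then show ?thesis
    unfolding dd_def max[symmetric] using T upper max by (intro Max_eqI) auto
qed

section \<open>The orders on supports\<close>

definition tail_dominated :: "nat set \<Rightarrow> nat set \<Rightarrow> bool" where
  "tail_dominated X Y \<longleftrightarrow> (\<forall>v. card {x \<in> X. v \<le> x} \<le> card {y \<in> Y. v \<le> y})"

lemma tail_dominated_refl [simp]: "tail_dominated X X"
  by (simp add: tail_dominated_def)

lemma tail_dominated_trans:
  "tail_dominated X Y \<Longrightarrow> tail_dominated Y Z \<Longrightarrow> tail_dominated X Z"
  unfolding tail_dominated_def using order_trans by blast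

lemma tail_dominated_card_le: "tail_dominated X Y \<Longrightarrow> card X \<le> card Y"
  unfolding tail_dominated_def by (erule allE[of _ 0]) simp

lemma tail_dominated_floor_supp_ceil_supp:
  assumes "finite A"
  shows "tail_dominated (floor_supp A) (ceil_supp A)"
  unfolding tail_dominated_def
proof
  fix v
  define g where "g x = (if x \<in> A then x else Suc x + run_length A (Suc x))" for x
  have g_mem_iff: "g x \<in> A \<longleftrightarrow> x \<in> A" for x
    using run_length_notin[OF assms, of "Suc x"] by (simp add: g_def)
  have g_mem: "g x \<in> ceil_supp A" and g_ge: "x \<le> g x" if "x \<in> floor_supp A" for x
  proof -
    show "x \<le> g x"
      by (simp add: g_def)
    show "g x \<in> ceil_supp A"
    proof (cases "x \<in> A")
      case False
      then have "Suc x \<in> odd_run_starts A"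
        using floor_supp_new[OF assms that] by blast
      then show ?thesis
        using False unfolding g_def ceil_supp_eq[OF assms] by (intro UnI2 image_eqI) auto
    qed (use subset_ceil_supp in \<open>auto simp: g_def\<close>)
  qed
  have "inj_on g (floor_supp A)"
  proof (rule inj_onI)
    fix x y assume x: "x \<in> floor_supp A" and y: "y \<in> floor_supp A" and e: "g x = g y"
    show "x = y"
    proof (cases "x \<in> A")
      case True
      then show ?thesis
        using e g_mem_iff by (metis g_def)
    next
      case False
      then have "y \<notin> A"
        using e g_mem_iff by metis
      have "Suc x \<in> run_starts A" "Suc y \<in> run_starts A"
        using floor_supp_new[OF assms] x y False \<open>y \<notin> A\<close> by (auto simp: odd_run_starts_def)
      moreover have "Suc x + run_length A (Suc x) = Suc y + run_length A (Suc y)"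
        using e False \<open>y \<notin> A\<close> by (simp add: g_def)
      ultimately show ?thesis
        using inj_onD[OF run_end_inj_on[OF assms]] by blast
    qed
  qed
  then show "card {x \<in> floor_supp A. v \<le> x} \<le> card {y \<in> ceil_supp A. v \<le> y}"
    using g_mem g_ge finite_ceil_supp[OF assms]
    by (intro card_inj_on_le[of g]) (auto intro: inj_on_subset order_trans)
qed

lemma nth_rev_sorted_list_of_set_ge_iff:
  fixes X :: "'a::linorder set"
  assumes "finite X" and "i < card X"
  shows "v \<le> rev (sorted_list_of_set X) ! i \<longleftrightarrow> i < card {x \<in> X. v \<le> x}"
proof -
  define xs where "xs = rev (sorted_list_of_set X)"
  have len: "length xs = card X" and dist: "distinct xs" and set: "set xs = X"
    using assms(1) by (simp_all add: xs_def)
  have antimono: "xs ! k \<le> xs ! j" if "j \<le> k" "k < length xs" for j k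
    using that sorted_nth_mono[OF sorted_sorted_list_of_set, of "card X - Suc k" "card X - Suc j" X]
    by (simp add: xs_def rev_nth len[unfolded xs_def])
  let ?J = "{j. j < length xs \<and> v \<le> xs ! j}"
  have "{x \<in> X. v \<le> x} = (!) xs ` ?J"
    using set by (auto simp: in_set_conv_nth)
  moreover have "inj_on ((!) xs) ?J"
    using dist by (auto simp: inj_on_def nth_eq_iff_index_eq)
  ultimately have card_eq: "card {x \<in> X. v \<le> x} = card ?J"
    by (simp add: card_image)
  show ?thesis
    unfolding xs_def[symmetric] card_eq
  proof
    assume "v \<le> xs ! i"
    then have "{..i} \<subseteq> ?J"
      using antimono assms(2) len by (auto intro: order_trans)
    then have "card {..i} \<le> card ?J"
      by (rule card_mono[rotated]) simp
    then show "i < card ?J"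
      by simp
  next
    assume "i < card ?J"
    moreover have "\<not> v \<le> xs ! i \<Longrightarrow> ?J \<subseteq> {..<i}"
      using antimono by (force simp: not_less[symmetric])
    ultimately show "v \<le> xs ! i"
      using card_mono[of "{..<i}" ?J] by fastforce
  qed
qed

lemma card_ge_le_card: "finite X \<Longrightarrow> card {x \<in> X. v \<le> x} \<le> card X"
  by (rule card_mono) auto

lemma rev_sorted_list_of_set_le_iff_tail_dominated:
  fixes X Y :: "nat set"
  assumes "finite X" and "finite Y"
  defines "xs \<equiv> rev (sorted_list_of_set X)" and "ys \<equiv> rev (sorted_list_of_set Y)"
  shows "(length xs \<le> length ys \<and> (\<forall>i<length xs. xs ! i \<le> ys ! i)) \<longleftrightarrow> tail_dominated X Y"
proof
  assume le: "length xs \<le> length ys \<and> (\<forall>i<length xs. xs ! i \<le> ys ! i)"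
  show "tail_dominated X Y"
    unfolding tail_dominated_def
  proof
    fix v
    show "card {x \<in> X. v \<le> x} \<le> card {y \<in> Y. v \<le> y}"
    proof (cases "card {x \<in> X. v \<le> x}")
      case (Suc i)
      then have i: "i < card X" "i < card Y"
        using card_ge_le_card[OF assms(1), of v] le by (simp_all add: xs_def ys_def)
      then have "v \<le> xs ! i"
        using nth_rev_sorted_list_of_set_ge_iff[OF assms(1)] Suc by (simp add: xs_def)
      then have "v \<le> ys ! i"
        using le i by (force simp: xs_def)
      then show ?thesis
        using nth_rev_sorted_list_of_set_ge_iff[OF assms(2) i(2)] Suc by (simp add: ys_def)
    qed simp
  qed
next
  assume dom: "tail_dominated X Y"
  have "xs ! i \<le> ys ! i" if i: "i < card X" for i
  proof -
    have "i < card {x \<in> X. xs ! i \<le> x}"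
      using nth_rev_sorted_list_of_set_ge_iff[OF assms(1) i, of "xs ! i"] by (simp add: xs_def)
    also have "\<dots> \<le> card {y \<in> Y. xs ! i \<le> y}"
      using dom by (simp add: tail_dominated_def)
    finally have "i < card {y \<in> Y. xs ! i \<le> y}" .
    moreover from this have "i < card Y"
      using card_ge_le_card[OF assms(2)] order_less_le_trans by blast
    ultimately show ?thesis
      using nth_rev_sorted_list_of_set_ge_iff[OF assms(2)] by (simp add: ys_def)
  qed
  then show "length xs \<le> length ys \<and> (\<forall>i<length xs. xs ! i \<le> ys ! i)"
    using tail_dominated_card_le[OF dom] by (simp add: xs_def ys_def)
qed

lemma supp_of_supp [simp]: "supp (of_supp X) = X"
  by (simp add: supp_def of_supp_def)

lemma of_supp_mem_SSplus: "finite X \<Longrightarrow> of_supp X \<in> SSplus"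
  by (simp add: SSplus_def SS_def) (simp add: of_supp_def)

lemma of_supp_mem_SSplus_circ:
  assumes "finite X" and "odd_run_starts X = {}"
  shows "of_supp X \<in> SSplus_circ"
  using dd_eq_card_floor_supp[OF of_supp_mem_SSplus[OF assms(1)]] of_supp_mem_SSplus[OF assms(1)]
  by (simp add: SSplus_circ_def floor_supp_eq_self[OF assms])

lemma prec0_of_supp_iff:
  assumes "finite X" "odd_run_starts X = {}" "finite Y" "odd_run_starts Y = {}"
  shows "prec0 (of_supp X) (of_supp Y) \<longleftrightarrow> tail_dominated X Y"
  using of_supp_mem_SSplus_circ[OF assms(1,2)] of_supp_mem_SSplus_circ[OF assms(3,4)]
    rev_sorted_list_of_set_le_iff_tail_dominated[OF assms(1,3)]
  by (simp add: prec0_def dsupp_def)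

lemma sfloor_mem_SSplus: "s \<in> SSplus \<Longrightarrow> sfloor s \<in> SSplus"
  by (simp add: sfloor_def of_supp_mem_SSplus finite_floor_supp SSplus_finite_supp)

lemma sceil_mem_SSplus: "s \<in> SSplus \<Longrightarrow> sceil s \<in> SSplus"
  by (simp add: sceil_def of_supp_mem_SSplus finite_ceil_supp SSplus_finite_supp)

lemma supp_sfloor: "supp (sfloor s) = floor_supp (supp s)"
  by (simp add: sfloor_def)

lemma supp_sceil: "supp (sceil s) = ceil_supp (supp s)"
  by (simp add: sceil_def)

lemma prec_iff_tail_dominated:
  assumes "s \<in> SSplus" and "s' \<in> SSplus"
  shows "prec s s' \<longleftrightarrow> s = s' \<or> tail_dominated (ceil_supp (supp s)) (floor_supp (supp s'))"
proof -
  have fin: "finite (supp s)" "finite (supp s')"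
    using assms by (simp_all add: SSplus_finite_supp)
  show ?thesis
    unfolding prec_def sceil_def sfloor_def
    using assms fin prec0_of_supp_iff[OF finite_ceil_supp odd_run_starts_ceil_supp
        finite_floor_supp odd_run_starts_floor_supp]
    by auto
qed

lemma prec_refl: "s \<in> SSplus \<Longrightarrow> prec s s"
  by (simp add: prec_def)

lemma floor_supp_floor_supp: "finite A \<Longrightarrow> floor_supp (floor_supp A) = floor_supp A"
  by (simp add: floor_supp_eq_self finite_floor_supp odd_run_starts_floor_supp)

lemma ceil_supp_floor_supp: "finite A \<Longrightarrow> ceil_supp (floor_supp A) = floor_supp A"
  by (simp add: ceil_supp_eq_self finite_floor_supp odd_run_starts_floor_supp)

lemma floor_supp_ceil_supp: "finite A \<Longrightarrow> floor_supp (ceil_supp A) = ceil_supp A"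
  by (simp add: floor_supp_eq_self finite_ceil_supp odd_run_starts_ceil_supp)

lemma ceil_supp_ceil_supp: "finite A \<Longrightarrow> ceil_supp (ceil_supp A) = ceil_supp A"
  by (simp add: ceil_supp_eq_self finite_ceil_supp odd_run_starts_ceil_supp)

lemma prec_sfloor_self:
  assumes "s \<in> SSplus"
  shows "prec (sfloor s) s"
  using prec_iff_tail_dominated[OF sfloor_mem_SSplus[OF assms] assms] SSplus_finite_supp[OF assms]
  by (simp add: supp_sfloor ceil_supp_floor_supp)

lemma prec_self_sceil:
  assumes "s \<in> SSplus"
  shows "prec s (sceil s)"
  using prec_iff_tail_dominated[OF assms sceil_mem_SSplus[OF assms]] SSplus_finite_supp[OF assms]
  by (simp add: supp_sceil floor_supp_ceil_supp)

lemma prec_sfloor_mono: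
  assumes "prec s s'"
  shows "prec (sfloor s) (sfloor s')"
proof -
  have s: "s \<in> SSplus" "s' \<in> SSplus"
    using assms by (simp_all add: prec_def)
  note fin = SSplus_finite_supp[OF s(1)] SSplus_finite_supp[OF s(2)]
  show ?thesis
  proof (cases "s = s'")
    case False
    then have "tail_dominated (ceil_supp (supp s)) (floor_supp (supp s'))"
      using assms prec_iff_tail_dominated[OF s] by blast
    then have "tail_dominated (floor_supp (supp s)) (floor_supp (supp s'))"
      by (rule tail_dominated_trans[OF tail_dominated_floor_supp_ceil_supp[OF fin(1)]])
    then show ?thesis
      using prec_iff_tail_dominated[OF sfloor_mem_SSplus[OF s(1)] sfloor_mem_SSplus[OF s(2)]] fin
      by (simp add: supp_sfloor ceil_supp_floor_supp floor_supp_floor_supp)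
  qed (use prec_refl sfloor_mem_SSplus s in auto)
qed

lemma prec_sceil_mono:
  assumes "prec s s'"
  shows "prec (sceil s) (sceil s')"
proof -
  have s: "s \<in> SSplus" "s' \<in> SSplus"
    using assms by (simp_all add: prec_def)
  note fin = SSplus_finite_supp[OF s(1)] SSplus_finite_supp[OF s(2)]
  show ?thesis
  proof (cases "s = s'")
    case False
    then have "tail_dominated (ceil_supp (supp s)) (floor_supp (supp s'))"
      using assms prec_iff_tail_dominated[OF s] by blast
    then have "tail_dominated (ceil_supp (supp s)) (ceil_supp (supp s'))"
      using tail_dominated_trans tail_dominated_floor_supp_ceil_supp[OF fin(2)] by blast
    then show ?thesis
      using prec_iff_tail_dominated[OF sceil_mem_SSplus[OF s(1)] sceil_mem_SSplus[OF s(2)]] fin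
      by (simp add: supp_sceil ceil_supp_ceil_supp floor_supp_ceil_supp)
  qed (use prec_refl sceil_mem_SSplus s in auto)
qed

lemma dd_mono:
  assumes "prec s s'"
  shows "dd s \<le> dd s'"
proof -
  have s: "s \<in> SSplus" "s' \<in> SSplus"
    using assms by (simp_all add: prec_def)
  note fin = SSplus_finite_supp[OF s(1)] SSplus_finite_supp[OF s(2)]
  show ?thesis
  proof (cases "s = s'")
    case False
    then have "tail_dominated (ceil_supp (supp s)) (floor_supp (supp s'))"
      using assms prec_iff_tail_dominated[OF s] by blast
    then have "card (ceil_supp (supp s)) \<le> card (floor_supp (supp s'))"
      by (rule tail_dominated_card_le)
    then show ?thesis
      using fin by (simp add: dd_eq_card_floor_supp s card_floor_supp card_ceil_supp)
  qed simp
qed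

theorem mainTheorem10:
  assumes "s \<in> SSplus" and "s' \<in> SSplus"
  shows "prec (sfloor s) s \<and> prec s (sceil s) \<and>
         (prec s s' \<longrightarrow> prec (sfloor s) (sfloor s') \<and> prec (sceil s) (sceil s') \<and> dd s \<le> dd s')"
  using prec_sfloor_self[OF assms(1)] prec_self_sceil[OF assms(1)]
    prec_sfloor_mono prec_sceil_mono dd_mono by blast

end
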